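(* Let $\mathcal P$ be a non-degenerate distribution, let $\tau_1\le\tau_2$ be integers, and let $\bm\ell_{\tau_1}=(\ell_{j,\tau_1})_{j\in[m]}\ge\bm0$ be an initial inventory. Let $(r_t,\bm a_t,\bm b_t)$, $t\in[\tau_1,\tau_2]$, be i.i.d. from $\mathcal P$. Run the following dual-price-based procedure: for $t=\tau_1,\dots,\tau_2$, choose a dual price vector $\bm p^t\in\mathbb{R}^m_{\ge0}$ using only information available up to time $t-1$ (so $\bm p^t$ is independent of $(r_t,\bm a_t,\bm b_t)$); then observe $(r_t,\bm a_t,\bm b_t)$, set $x_t=\mathbb{I}(r_t>\langle\bm a_t,\bm p^t\rangle)\cdot\mathbb{I}(\forall j\in[m],\ \ell_{j,t}+b_{jt}\ge a_{jt})$ and $\ell_{j,t+1}=\ell_{j,t}+b_{jt}-a_{jt}x_t$ for all $j$. Let $\mathcal E=\{\forall t\in[\tau_1,\tau_2]:\ \bm p^t\in\Omega_p\ \text{and}\ x_t=\mathbb{I}(r_t>\langle\bm a_t,\bm p^t\rangle)\}$. Then $$\mathbb{E}\Big[\sum_{t=\tau_1}^{\tau_2}r_tx_t+\langle\bm\ell_{\tau_2+1}-\bm\ell_{\tau_1},\bm p^*\rangle\Big]\ge(\tau_2-\tau_1+1)f(\bm p^*;\bm B)-\mu\bar a^2\,\mathbb{E}\sum_{t=\tau_1}^{\tau_2}\|\bm p^t-\bm p^*\|_2^2\,\mathbb{I}(\bm p^t\in\Omega_p)-2(\tau_2-\tau_1+1)\Big(\bar r+(\bar b+\bar a)\frac{\bar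 r}{\underline b}\Big)\Pr(\bar{\mathcal E}),$$ where $\bar{\mathcal E}$ is the complement of $\mathcal E$.
   Context: Bounded distribution $\mathcal P$ on $\mathbb{R}\times\mathbb{R}^m\times\mathbb{R}^m_{\ge0}$, sample $(r,\bm a,\bm b)$: constants $\bar r,\bar a,\bar b>0$ with $|r|<\bar r$, $\|\bm a\|_2<\bar a$, $\|\bm b\|_\infty<\bar b$ a.s., and $\underline b>0$ with $\mathbb{E}[b_j]>\underline b$ for all $j$. Let $\bm B=\mathbb{E}[\bm b]$. For $\bm B'\in\mathbb{R}^m_{\ge0}$, $\bm p\in\mathbb{R}^m_{\ge0}$ let $f(\bm p;\bm B')=\langle\bm p,\bm B'\rangle+\mathbb{E}_{(r,\bm a,\bm b)\sim\mathcal P}[r-\langle\bm a,\bm p\rangle]^+$. Let $\Omega_b=\times_{j=1}^m(\underline b,\bar b)$ and $\Omega_p=\{\bm p\in\mathbb{R}^m_{\ge0}:\sum_jp_j\le\bar r/\underline b\}$. $\mathcal P$ is non-degenerate if it is bounded and: (1) $\mathbb{E}[\bm a\bm a^\top]$ is positive definite with minimum eigenvalue $\lambda_{\min}>0$; (2) there are $\lambda,\mu>0$ such that for all $\bm p'\in\Omega_p$, $\bm B'\in\Omega_b$, and every $\bm p^*\in\arg\min_{\bm p\ge0}f(\bm p;\bm B')$, with $(\tilde r,\tilde{\bm a},\tilde{\bm b})\sim\mathcal P$: $\lambda|\langle\tilde{\bm a},\bm p'\rangle-\langle\tilde{\bm a},\bm p^*\rangle|\le|\Pr(\tilde r>\langle\tilde{\bm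 a},\bm p'\rangle\mid\tilde{\bm a})-\Pr(\tilde r>\langle\tilde{\bm a},\bm p^*\rangle\mid\tilde{\bm a})|\le\mu|\langle\tilde{\bm a},\bm p'\rangle-\langle\tilde{\bm a},\bm p^*\rangle|$; (3) for all $\bm B'\in\Omega_b$, every $\bm p^*\in\arg\min_{\bm p\ge0}f(\bm p;\bm B')$ and every $j$: $p^*_j=0\iff B'_j>\mathbb{E}[a_j\mathbb{I}(r>\langle\bm a,\bm p^*\rangle)]$ and $p^*_j>0\iff B'_j=\mathbb{E}[a_j\mathbb{I}(r>\langle\bm a,\bm p^*\rangle)]$. For non-degenerate $\mathcal P$ the minimizer of $f(\cdot;\bm B)$ over $\bm p\ge\bm 0$ is unique; it is denoted $\bm p^*$. *)

theory Defs
  imports "HOL-Probability.Probability"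
begin

type_synonym 'm sample = "real \<times> (real ^ 'm) \<times> (real ^ 'm)"

definition s_r :: "'m sample \<Rightarrow> real" where "s_r s = fst s"
definition s_a :: "'m sample \<Rightarrow> real ^ 'm" where "s_a s = fst (snd s)"
definition s_b :: "'m sample \<Rightarrow> real ^ 'm" where "s_b s = snd (snd s)"

definition dualf :: "'m::finite sample measure \<Rightarrow> real ^ 'm \<Rightarrow> real ^ 'm \<Rightarrow> real" where
  "dualf P p B' = p \<bullet> B' + (\<integral>s. max 0 (s_r s - s_a s \<bullet> p) \<partial>P)"

definition nonneg_vec :: "real ^ 'm \<Rightarrow> bool" where
  "nonneg_vec p \<longleftrightarrow> (\<forall>j. 0 \<le> p $ j)"

definition is_dual_min :: "'m::finite sample measure \<Rightarrow> real ^ 'm \<Rightarrow> real ^ 'm \<Rightarrow> bool" where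
  "is_dual_min P B' p \<longleftrightarrow> nonneg_vec p \<and> (\<forall>q. nonneg_vec q \<longrightarrow> dualf P p B' \<le> dualf P q B')"

definition Omega_b :: "real \<Rightarrow> real \<Rightarrow> (real ^ 'm) set" where
  "Omega_b bl bu = {B'. \<forall>j. bl < B' $ j \<and> B' $ j < bu}"

definition Omega_p :: "real \<Rightarrow> real \<Rightarrow> (real ^ 'm::finite) set" where
  "Omega_p rbar bl = {p. nonneg_vec p \<and> (\<Sum>j\<in>UNIV. p $ j) \<le> rbar / bl}"

definition meanB :: "'m::finite sample measure \<Rightarrow> real ^ 'm" where
  "meanB P = (\<chi> j. \<integral>s. s_b s $ j \<partial>P)"

definition bounded_dist :: "'m::finite sample measure \<Rightarrow> real \<Rightarrow> real \<Rightarrow> real \<Rightarrow> real \<Rightarrow> bool" where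
  "bounded_dist P rbar abar bbar bl \<longleftrightarrow>
     prob_space P \<and> sets P = sets borel \<and>
     0 < rbar \<and> 0 < abar \<and> 0 < bbar \<and> 0 < bl \<and>
     (AE s in P. \<bar>s_r s\<bar> < rbar \<and> norm (s_a s) < abar \<and> (\<forall>j. 0 \<le> s_b s $ j \<and> s_b s $ j < bbar)) \<and>
     (\<forall>j. (\<integral>s. s_b s $ j \<partial>P) > bl)"

definition second_moment :: "'m::finite sample measure \<Rightarrow> real ^ 'm ^ 'm" where
  "second_moment P = (\<chi> i j. \<integral>s. s_a s $ i * s_a s $ j \<partial>P)"

definition pos_def :: "real ^ 'm ^ 'm \<Rightarrow> bool" where
  "pos_def A \<longleftrightarrow> (\<forall>x. x \<noteq> 0 \<longrightarrow> x \<bullet> (A *v x) > 0)"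

definition sigma_a :: "'m::finite sample measure \<Rightarrow> 'm sample measure" where
  "sigma_a P = vimage_algebra (space P) s_a borel"

text \<open>Pr(r > <a,p> | a), as a (version of the) conditional expectation\<close>
definition cond_prob_accept :: "'m::finite sample measure \<Rightarrow> real ^ 'm \<Rightarrow> 'm sample \<Rightarrow> real" where
  "cond_prob_accept P p = real_cond_exp P (sigma_a P) (indicator {s. s_r s > s_a s \<bullet> p})"

definition nondegenerate ::
  "'m::finite sample measure \<Rightarrow> real \<Rightarrow> real \<Rightarrow> real \<Rightarrow> real \<Rightarrow> real \<Rightarrow> real \<Rightarrow> bool" where
  "nondegenerate P rbar abar bbar bl lam mu \<longleftrightarrow>
     bounded_dist P rbar abar bbar bl \<and>
     pos_def (second_moment P) \<and>
     0 < lam \<and> 0 < mu \<and>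
     (\<forall>p' \<in> Omega_p rbar bl. \<forall>B' \<in> Omega_b bl bbar. \<forall>ps. is_dual_min P B' ps \<longrightarrow>
        (AE s in P.
           lam * \<bar>s_a s \<bullet> p' - s_a s \<bullet> ps\<bar> \<le> \<bar>cond_prob_accept P p' s - cond_prob_accept P ps s\<bar> \<and>
           \<bar>cond_prob_accept P p' s - cond_prob_accept P ps s\<bar> \<le> mu * \<bar>s_a s \<bullet> p' - s_a s \<bullet> ps\<bar>)) \<and>
     (\<forall>B' \<in> Omega_b bl bbar. \<forall>ps. is_dual_min P B' ps \<longrightarrow> (\<forall>j.
        (ps $ j = 0 \<longleftrightarrow> B' $ j > (\<integral>s. s_a s $ j * indicator {s. s_r s > s_a s \<bullet> ps} s \<partial>P)) \<and>
        (ps $ j > 0 \<longleftrightarrow> B' $ j = (\<integral>s. s_a s $ j * indicator {s. s_r s > s_a s \<bullet> ps} s \<partial>P))))"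

end

theory Submission
  imports Defs
begin

(* Telescoping the inventory turns the objective into a sum of per-period priced rewards
   r x + <b - x a, p*>.  On the event E the period-t decision is the acceptance indicator of the
   price p_t, and since p_t is independent of the period-t sample, Fubini reduces the expected
   reward to the expectation under P at a fixed price q.  For q in Omega_p the gain over the price
   p* is at least <a, q - p*> (I_q - I_p* ); conditioning on a replaces the indicators by acceptance
   probabilities, whose difference is at most mu |<a, q - p*>| by nondegeneracy, so the loss
   against f(p*; B) is at most mu abar^2 |q - p*|^2.  Off E every priced reward is bounded by
   rbar + (bbar + abar) rbar / bl, which accounts for the last term. *)

section \<open>Integrals against independent random variables\<close>

lemma (in prob_space) indep_set_vimage_if_subalgebra:
  assumes F: "subalgebra M F" and X: "X \<in> measurable F S" and indep: "indep_set (sets F) B"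
  shows "indep_set {X -` A \<inter> space M | A. A \<in> sets S} B"
proof -
  have "X -` A \<inter> space M \<in> sets F" if "A \<in> sets S" for A
    using measurable_sets[OF X that] F by (simp add: subalgebra_def)
  then show ?thesis
    unfolding indep_set_def
    by (intro indep_sets_mono_sets[OF indep[unfolded indep_set_def]]) (auto split: bool.split)
qed

text \<open>Independence is phrased through the preimage families because \<open>indep_var\<close> requires both
  random variables to take values in the same type.\<close>

lemma (in prob_space) distr_pair_eq_if_indep_set:
  assumes X: "random_variable S X" and Z: "random_variable T Z"
    and indep: "indep_set {X -` A \<inter> space M | A. A \<in> sets S} {Z -` B \<inter> space M | B. B \<in> sets T}"
  shows "distr M S X \<Otimes>\<^sub>M distr M T Z = distr M (S \<Otimes>\<^sub>M T) (\<lambda>w. (X w, Z w))"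
proof (rule pair_measure_eqI)
  show "sigma_finite_measure (distr M S X)" "sigma_finite_measure (distr M T Z)"
    using X Z by (simp_all add: prob_space_distr prob_space_imp_sigma_finite)
  show "sets (distr M S X \<Otimes>\<^sub>M distr M T Z) = sets (distr M (S \<Otimes>\<^sub>M T) (\<lambda>w. (X w, Z w)))"
    by simp
next
  fix A B assume A: "A \<in> sets (distr M S X)" and B: "B \<in> sets (distr M T Z)"
  have XZ: "(\<lambda>w. (X w, Z w)) \<in> measurable M (S \<Otimes>\<^sub>M T)" using X Z by measurable
  have "(\<lambda>w. (X w, Z w)) -` (A \<times> B) \<inter> space M = (X -` A \<inter> space M) \<inter> (Z -` B \<inter> space M)" by auto
  moreover have "prob ((X -` A \<inter> space M) \<inter> (Z -` B \<inter> space M)) = prob (X -` A \<inter> space M) * prob (Z -` B \<inter> space M)"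
    using indep A B unfolding indep_sets2_eq by simp blast
  ultimately show "emeasure (distr M S X) A * emeasure (distr M T Z) B
      = emeasure (distr M (S \<Otimes>\<^sub>M T) (\<lambda>w. (X w, Z w))) (A \<times> B)"
    using A B X Z XZ by (simp add: emeasure_distr emeasure_eq_measure ennreal_mult)
qed

lemma (in prob_space) integral_indep_ge:
  fixes h :: "'s \<Rightarrow> 't \<Rightarrow> real"
  assumes X: "random_variable S X" and Z: "random_variable T Z"
    and indep: "indep_set {X -` A \<inter> space M | A. A \<in> sets S} {Z -` B \<inter> space M | B. B \<in> sets T}"
    and h: "case_prod h \<in> borel_measurable (S \<Otimes>\<^sub>M T)"
    and int: "integrable M (\<lambda>w. h (X w) (Z w))"
    and bound: "\<And>w. w \<in> space M \<Longrightarrow> c \<le> (\<integral>s. h (X w) s \<partial>distr M T Z)"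
  shows "c \<le> (\<integral>w. h (X w) (Z w) \<partial>M)"
proof -
  note joint = distr_pair_eq_if_indep_set[OF X Z indep]
  interpret XZ: pair_prob_space "distr M S X" "distr M T Z"
    using X Z by (simp add: pair_prob_space_def pair_sigma_finite_def prob_space_distr prob_space_imp_sigma_finite)
  have XZ: "(\<lambda>w. (X w, Z w)) \<in> measurable M (S \<Otimes>\<^sub>M T)" using X Z by measurable
  have int_joint: "integrable (distr M S X \<Otimes>\<^sub>M distr M T Z) (case_prod h)"
    unfolding joint integrable_distr_eq[OF XZ h] using int by simp
  have inner_meas: "(\<lambda>q. \<integral>s. h q s \<partial>distr M T Z) \<in> borel_measurable S"
    using borel_measurable_integrable[OF XZ.integrable_fst'[OF int_joint]] by (simp cong: measurable_cong_sets)
  have inner_int: "integrable M (\<lambda>w. \<integral>s. h (X w) s \<partial>distr M T Z)"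
    using XZ.integrable_fst'[OF int_joint] X inner_meas by (simp add: integrable_distr_eq)
  have "(\<integral>w. h (X w) (Z w) \<partial>M) = (\<integral>y. case_prod h y \<partial>(distr M S X \<Otimes>\<^sub>M distr M T Z))"
    unfolding joint using XZ h by (subst integral_distr) auto
  also have "\<dots> = (\<integral>q. (\<integral>s. h q s \<partial>distr M T Z) \<partial>distr M S X)"
    using XZ.integral_fst'[OF int_joint] by simp
  also have "\<dots> = (\<integral>w. (\<integral>s. h (X w) s \<partial>distr M T Z) \<partial>M)"
    using X inner_meas by (simp add: integral_distr)
  finally show ?thesis
    using inner_int bound by (simp add: integral_ge_const AE_I2)
qed

section \<open>Samples, acceptance and priced rewards\<close>

lemma borel_measurable_vec_nth[measurable (raw)]:
  fixes f :: "'w \<Rightarrow> real ^ 'n"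
  shows "f \<in> borel_measurable M \<Longrightarrow> (\<lambda>x. f x $ j) \<in> borel_measurable M"
  using measurable_compose[OF _ borel_measurable_nth] by blast

lemma borel_measurable_sample_components[measurable]:
  "s_r \<in> borel_measurable borel" "s_a \<in> borel_measurable borel" "s_b \<in> borel_measurable borel"
  unfolding s_r_def[abs_def] s_a_def[abs_def] s_b_def[abs_def]
  by (intro borel_measurable_continuous_onI continuous_intros)+

definition accept :: "real ^ 'm \<Rightarrow> 'm sample \<Rightarrow> real" where
  "accept q = indicator {s. s_r s > s_a s \<bullet> q}"

definition priced_reward :: "real ^ 'm \<Rightarrow> real \<Rightarrow> 'm sample \<Rightarrow> real" where
  "priced_reward ps y s = s_r s * y + (s_b s - y *\<^sub>R s_a s) \<bullet> ps"

definition sample_bounded :: "real \<Rightarrow> real \<Rightarrow> real \<Rightarrow> 'm::finite sample \<Rightarrow> bool" where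
  "sample_bounded rbar abar bbar s \<longleftrightarrow>
     \<bar>s_r s\<bar> < rbar \<and> norm (s_a s) < abar \<and> (\<forall>j. 0 \<le> s_b s $ j \<and> s_b s $ j < bbar)"

lemma measurable_accept[measurable]:
  "(\<lambda>(q, s). accept q s) \<in> borel_measurable (borel \<Otimes>\<^sub>M borel)"
  unfolding accept_def indicator_def by measurable

lemma measurable_priced_reward[measurable]:
  "(\<lambda>(y, s). priced_reward ps y s) \<in> borel_measurable (borel \<Otimes>\<^sub>M borel)"
  unfolding priced_reward_def by measurable

lemma pred_sample_bounded[measurable]: "Measurable.pred borel (sample_bounded rbar abar bbar)"
  unfolding sample_bounded_def by measurable

lemma accept_cases: "accept q s = 0 \<or> accept q s = 1"
  unfolding accept_def indicator_def by auto

lemma Omega_p_borel[measurable]: "Omega_p rbar bl \<in> sets borel"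
proof (rule borel_closed)
  have "Omega_p rbar bl = (\<Inter>j. {p::real^'a. 0 \<le> p $ j}) \<inter> {p. (\<Sum>j\<in>UNIV. p $ j) \<le> rbar / bl}"
    unfolding Omega_p_def nonneg_vec_def by auto
  moreover have "closed {p::real^'a. (\<Sum>j\<in>UNIV. p $ j) \<le> rbar / bl}" "closed {p::real^'a. 0 \<le> p $ j}" for j
    by (intro closed_Collect_le continuous_intros)+
  ultimately show "closed (Omega_p rbar bl :: (real^'a) set)" by (simp add: closed_INT closed_Int)
qed

lemma norm_le_sum_if_nonneg_vec:
  fixes q :: "real^'m::finite"
  assumes "nonneg_vec q" shows "norm q \<le> (\<Sum>j\<in>UNIV. q $ j)"
  using norm_le_l1_cart[of q] assms unfolding nonneg_vec_def by simp

lemma abs_inner_s_a_le: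
  assumes "sample_bounded rbar abar bbar s" shows "\<bar>s_a s \<bullet> v\<bar> \<le> abar * norm v"
proof -
  have "\<bar>s_a s \<bullet> v\<bar> \<le> norm (s_a s) * norm v" by (rule Cauchy_Schwarz_ineq2)
  also have "\<dots> \<le> abar * norm v"
    using assms by (auto simp: sample_bounded_def intro!: mult_right_mono)
  finally show ?thesis .
qed

text \<open>The acceptance indicator of price q maximises y (r - <a, q>) over y in {0, 1}.\<close>
lemma priced_reward_accept_diff_ge:
  "s_a s \<bullet> (q - ps) * (accept q s - accept ps s)
     \<le> priced_reward ps (accept q s) s - priced_reward ps (accept ps s) s"
proof -
  have "priced_reward ps (accept q s) s - priced_reward ps (accept ps s) s
      = (s_r s - s_a s \<bullet> ps) * (accept q s - accept ps s)"
    unfolding priced_reward_def by (simp add: inner_diff_left algebra_simps)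
  moreover have "0 \<le> (s_r s - s_a s \<bullet> q) * (accept q s - accept ps s)"
    unfolding accept_def indicator_def by auto
  ultimately show ?thesis by (simp add: inner_diff_right algebra_simps)
qed

section \<open>A single period under a nondegenerate distribution\<close>

locale nondegenerate_dual =
  fixes P :: "'m::finite sample measure" and rbar abar bbar bl lam mu :: real and pstar :: "real ^ 'm"
  assumes nondeg: "nondegenerate P rbar abar bbar bl lam mu"
    and pstar: "is_dual_min P (meanB P) pstar"
begin

lemma bounded_dist_P: "bounded_dist P rbar abar bbar bl"
  using nondeg unfolding nondegenerate_def by blast

sublocale P: prob_space P
  using bounded_dist_P unfolding bounded_dist_def by blast

lemma sets_P[measurable_cong]: "sets P = sets borel"
  using bounded_dist_P unfolding bounded_dist_def by blast

lemma bounds_pos: "0 < rbar" "0 < abar" "0 < bbar" "0 < bl" "0 < mu"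
  using nondeg unfolding nondegenerate_def bounded_dist_def by blast+

lemma AE_sample_bounded: "AE s in P. sample_bounded rbar abar bbar s"
  using bounded_dist_P unfolding bounded_dist_def sample_bounded_def by blast

lemma AE_sample_bounded_distr:
  assumes "Z \<in> borel_measurable M" and "distr M borel Z = P"
  shows "AE w in M. sample_bounded rbar abar bbar (Z w)"
  using AE_sample_bounded unfolding assms(2)[symmetric] by (simp add: AE_distr_iff assms(1))

lemma integral_s_b_gt: "bl < (\<integral>s. s_b s $ j \<partial>P)"
  using bounded_dist_P unfolding bounded_dist_def by blast

lemma integrable_if_bounded_on_samples:
  fixes B :: real
  assumes "f \<in> borel_measurable P" and "\<And>s. sample_bounded rbar abar bbar s \<Longrightarrow> \<bar>f s\<bar> \<le> B"
  shows "integrable P f"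
  using assms AE_sample_bounded by (intro P.integrable_const_bound[where B=B]) auto

lemma integrable_s_b: "integrable P (\<lambda>s. s_b s $ j)"
  by (rule integrable_if_bounded_on_samples[where B=bbar]) (measurable, auto simp: sample_bounded_def less_imp_le)

lemma meanB_in_Omega_b: "meanB P \<in> Omega_b bl bbar"
proof -
  have "(\<integral>s. s_b s $ j \<partial>P) < (\<integral>s. bbar \<partial>P)" for j
  proof (rule P.integral_less_AE_space)
    show "AE s in P. s_b s $ j < bbar"
      using AE_sample_bounded by eventually_elim (auto simp: sample_bounded_def)
  qed (auto simp: integrable_s_b P.emeasure_space_1)
  then show ?thesis using integral_s_b_gt P.prob_space unfolding Omega_b_def meanB_def by auto
qed

lemma cond_prob_accept_lipschitz:
  assumes "q \<in> Omega_p rbar bl"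
  shows "AE s in P. \<bar>cond_prob_accept P q s - cond_prob_accept P pstar s\<bar> \<le> mu * \<bar>s_a s \<bullet> q - s_a s \<bullet> pstar\<bar>"
proof -
  have "\<forall>p' \<in> Omega_p rbar bl. \<forall>B' \<in> Omega_b bl bbar. \<forall>ps. is_dual_min P B' ps \<longrightarrow>
        (AE s in P.
           lam * \<bar>s_a s \<bullet> p' - s_a s \<bullet> ps\<bar> \<le> \<bar>cond_prob_accept P p' s - cond_prob_accept P ps s\<bar> \<and>
           \<bar>cond_prob_accept P p' s - cond_prob_accept P ps s\<bar> \<le> mu * \<bar>s_a s \<bullet> p' - s_a s \<bullet> ps\<bar>)"
    using nondeg unfolding nondegenerate_def by blast
  then show ?thesis
    using assms meanB_in_Omega_b pstar by (fast elim: eventually_mono)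
qed

lemma integrable_pos_part: "integrable P (\<lambda>s. max 0 (s_r s - s_a s \<bullet> q))"
proof (rule integrable_if_bounded_on_samples[where B="rbar + abar * norm q"])
  fix s :: "'m sample" assume s: "sample_bounded rbar abar bbar s"
  then show "\<bar>max 0 (s_r s - s_a s \<bullet> q)\<bar> \<le> rbar + abar * norm q"
    using abs_inner_s_a_le[OF s, of q] by (auto simp: sample_bounded_def)
qed measurable

lemma pstar_nonneg: "nonneg_vec pstar"
  using pstar unfolding is_dual_min_def by blast

lemma pstar_sum_le: "(\<Sum>j\<in>UNIV. pstar $ j) \<le> rbar / bl"
proof -
  have "dualf P pstar (meanB P) \<le> dualf P 0 (meanB P)"
    using pstar unfolding is_dual_min_def nonneg_vec_def by simp
  also have "dualf P 0 (meanB P) = (\<integral>s. max 0 (s_r s) \<partial>P)" unfolding dualf_def by simp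
  also have "\<dots> \<le> rbar"
  proof (rule P.integral_le_const)
    show "integrable P (\<lambda>s. max 0 (s_r s))" using integrable_pos_part[of 0] by simp
    show "AE s in P. max 0 (s_r s) \<le> rbar"
      using AE_sample_bounded by eventually_elim (use bounds_pos in \<open>auto simp: sample_bounded_def\<close>)
  qed
  finally have "pstar \<bullet> meanB P \<le> rbar"
    unfolding dualf_def by (smt (verit) Bochner_Integration.integral_nonneg max.cobounded1)
  moreover have "(\<Sum>j\<in>UNIV. pstar $ j * bl) \<le> pstar \<bullet> meanB P"
    unfolding meanB_def inner_vec_def using pstar_nonneg integral_s_b_gt
    by (auto simp: nonneg_vec_def less_imp_le intro!: sum_mono mult_left_mono)
  ultimately have "(\<Sum>j\<in>UNIV. pstar $ j) * bl \<le> rbar"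
    by (simp add: sum_distrib_right)
  then show ?thesis using bounds_pos by (simp add: field_simps)
qed

lemma norm_diff_pstar_le:
  assumes "q \<in> Omega_p rbar bl" shows "norm (q - pstar) \<le> 2 * (rbar / bl)"
proof -
  have "norm (q - pstar) \<le> norm q + norm pstar" by (rule norm_triangle_ineq4)
  also have "\<dots> \<le> rbar / bl + rbar / bl"
    using norm_le_sum_if_nonneg_vec[of q] norm_le_sum_if_nonneg_vec[OF pstar_nonneg] pstar_sum_le assms
    unfolding Omega_p_def by (intro add_mono) auto
  finally show ?thesis by simp
qed

definition reward_bound :: real where
  "reward_bound = rbar + (bbar + abar) * (rbar / bl)"

lemma priced_reward_bounded:
  assumes s: "sample_bounded rbar abar bbar s" and y: "y = 0 \<or> y = 1"
  shows "\<bar>priced_reward pstar y s\<bar> \<le> reward_bound"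
proof -
  let ?S = "\<Sum>j\<in>UNIV. pstar $ j"
  have "0 \<le> s_b s \<bullet> pstar"
    using s pstar_nonneg unfolding sample_bounded_def nonneg_vec_def inner_vec_def
    by (intro sum_nonneg) auto
  moreover have "s_b s \<bullet> pstar \<le> bbar * ?S"
    using s pstar_nonneg unfolding sample_bounded_def nonneg_vec_def inner_vec_def sum_distrib_left
    by (auto intro!: sum_mono mult_right_mono simp: less_imp_le)
  moreover have "\<bar>s_a s \<bullet> pstar\<bar> \<le> abar * ?S"
    using abs_inner_s_a_le[OF s, of pstar] norm_le_sum_if_nonneg_vec[OF pstar_nonneg] bounds_pos
    by (smt (verit) mult_left_mono)
  moreover have "bbar * ?S \<le> bbar * (rbar / bl)" "abar * ?S \<le> abar * (rbar / bl)"
    using mult_left_mono[OF pstar_sum_le, of bbar] mult_left_mono[OF pstar_sum_le, of abar] bounds_pos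
    by auto
  moreover have "\<bar>priced_reward pstar y s\<bar> \<le> \<bar>s_r s\<bar> + \<bar>s_b s \<bullet> pstar\<bar> + \<bar>s_a s \<bullet> pstar\<bar>"
    using y by (auto simp: priced_reward_def inner_diff_left)
  ultimately show ?thesis
    using s unfolding sample_bounded_def reward_bound_def distrib_right by linarith
qed

lemma priced_reward_diff_le:
  assumes "sample_bounded rbar abar bbar s" and "y = 0 \<or> y = 1" and "y' = 0 \<or> y' = 1"
  shows "priced_reward pstar y' s - 2 * reward_bound \<le> priced_reward pstar y s"
  using priced_reward_bounded[OF assms(1,2)] priced_reward_bounded[OF assms(1,3)] by (simp add: abs_le_iff)

lemma integral_s_b_inner: "(\<integral>s. s_b s \<bullet> v \<partial>P) = meanB P \<bullet> v"
proof -
  have "(\<integral>s. s_b s \<bullet> v \<partial>P) = (\<Sum>j\<in>UNIV. (\<integral>s. s_b s $ j \<partial>P) * v $ j)"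
    unfolding inner_vec_def using integrable_s_b by (subst Bochner_Integration.integral_sum) auto
  then show ?thesis unfolding meanB_def inner_vec_def by simp
qed

lemma integral_priced_reward_accept_pstar:
  "(\<integral>s. priced_reward pstar (accept pstar s) s \<partial>P) = dualf P pstar (meanB P)"
proof -
  have "priced_reward pstar (accept pstar s) s = max 0 (s_r s - s_a s \<bullet> pstar) + s_b s \<bullet> pstar" for s
    unfolding priced_reward_def accept_def indicator_def by (auto simp: inner_diff_left)
  moreover have "integrable P (\<lambda>s. s_b s \<bullet> pstar)"
    unfolding inner_vec_def using integrable_s_b by auto
  ultimately have "(\<integral>s. priced_reward pstar (accept pstar s) s \<partial>P)
      = (\<integral>s. max 0 (s_r s - s_a s \<bullet> pstar) \<partial>P) + (\<integral>s. s_b s \<bullet> pstar \<partial>P)"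
    using integrable_pos_part by simp
  then show ?thesis
    unfolding integral_s_b_inner dualf_def by (simp add: inner_commute)
qed

lemma sigma_finite_subalgebra_sigma_a: "sigma_finite_subalgebra P (sigma_a P)"
proof -
  have "sets (sigma_a P) \<subseteq> sets P"
    unfolding sigma_a_def by (subst sets_vimage_algebra2) (auto intro: measurable_sets)
  then have "subalgebra P (sigma_a P)"
    unfolding subalgebra_def sigma_a_def by simp
  then show ?thesis
    by (intro finite_measure_subalgebra_is_sigma_finite)
      (simp add: finite_measure_subalgebra_def finite_measure_subalgebra_axioms_def P.finite_measure_axioms)
qed

lemma integrable_inner_mult_accept: "integrable P (\<lambda>s. (s_a s \<bullet> v) * accept q s)"
proof (rule integrable_if_bounded_on_samples[where B="abar * norm v"])
  fix s :: "'m sample" assume "sample_bounded rbar abar bbar s"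
  then have "\<bar>s_a s \<bullet> v\<bar> \<le> abar * norm v" by (rule abs_inner_s_a_le)
  then show "\<bar>(s_a s \<bullet> v) * accept q s\<bar> \<le> abar * norm v"
    using accept_cases[of q s] by auto
qed measurable

lemma integral_inner_mult_cond_prob_accept:
  "integrable P (\<lambda>s. (s_a s \<bullet> v) * cond_prob_accept P q s)"
  "(\<integral>s. (s_a s \<bullet> v) * cond_prob_accept P q s \<partial>P) = (\<integral>s. (s_a s \<bullet> v) * accept q s \<partial>P)"
proof -
  interpret sigma_finite_subalgebra P "sigma_a P" by (rule sigma_finite_subalgebra_sigma_a)
  have "s_a \<in> borel_measurable (sigma_a P)"
    unfolding sigma_a_def by (rule measurable_vimage_algebra1) simp
  then have "(\<lambda>s. s_a s \<bullet> v) \<in> borel_measurable (sigma_a P)" by measurable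
  from real_cond_exp_intg[OF integrable_inner_mult_accept this]
  show "integrable P (\<lambda>s. (s_a s \<bullet> v) * cond_prob_accept P q s)"
    "(\<integral>s. (s_a s \<bullet> v) * cond_prob_accept P q s \<partial>P) = (\<integral>s. (s_a s \<bullet> v) * accept q s \<partial>P)"
    unfolding cond_prob_accept_def accept_def by auto
qed

lemma integrable_priced_reward_accept: "integrable P (\<lambda>s. priced_reward pstar (accept q s) s)"
  by (rule integrable_if_bounded_on_samples[where B=reward_bound]) (measurable, simp add: priced_reward_bounded accept_cases)

lemma inner_mult_cond_prob_accept_diff_ge:
  assumes q: "q \<in> Omega_p rbar bl"
  shows "AE s in P. - (mu * abar\<^sup>2 * (norm (q - pstar))\<^sup>2)
    \<le> (s_a s \<bullet> (q - pstar)) * (cond_prob_accept P q s - cond_prob_accept P pstar s)"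
  using cond_prob_accept_lipschitz[OF q] AE_sample_bounded
proof eventually_elim
  case (elim s)
  let ?d = "s_a s \<bullet> (q - pstar)" and ?c = "cond_prob_accept P q s - cond_prob_accept P pstar s"
  have "\<bar>?c\<bar> \<le> mu * \<bar>?d\<bar>"
    using elim(1) by (simp add: inner_diff_right)
  then have "\<bar>?d * ?c\<bar> \<le> \<bar>?d\<bar> * (mu * \<bar>?d\<bar>)"
    unfolding abs_mult by (rule mult_left_mono) simp
  also have "\<dots> = mu * \<bar>?d\<bar>\<^sup>2"
    by (simp add: power2_eq_square)
  also have "\<dots> \<le> mu * (abar * norm (q - pstar))\<^sup>2"
    using abs_inner_s_a_le[OF elim(2)] bounds_pos by (intro mult_left_mono power_mono) auto
  finally show ?case by (simp add: power_mult_distrib)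
qed

lemma integral_priced_reward_accept_ge:
  assumes q: "q \<in> Omega_p rbar bl"
  shows "dualf P pstar (meanB P) - mu * abar\<^sup>2 * (norm (q - pstar))\<^sup>2
    \<le> (\<integral>s. priced_reward pstar (accept q s) s \<partial>P)"
proof -
  define d where "d s = s_a s \<bullet> (q - pstar)" for s
  note cond = integral_inner_mult_cond_prob_accept[where v="q - pstar", folded d_def]
  note int_d_accept = integrable_inner_mult_accept[where v="q - pstar", folded d_def]
  have "- (mu * abar\<^sup>2 * (norm (q - pstar))\<^sup>2)
      \<le> (\<integral>s. d s * cond_prob_accept P q s - d s * cond_prob_accept P pstar s \<partial>P)"
    using inner_mult_cond_prob_accept_diff_ge[OF q] cond(1)[of q] cond(1)[of pstar]
    unfolding d_def[symmetric] right_diff_distrib by (intro P.integral_ge_const) auto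
  also have "\<dots> = (\<integral>s. d s * accept q s - d s * accept pstar s \<partial>P)"
    using cond int_d_accept by simp
  also have "\<dots> \<le> (\<integral>s. priced_reward pstar (accept q s) s - priced_reward pstar (accept pstar s) s \<partial>P)"
    using int_d_accept priced_reward_accept_diff_ge[of s q pstar for s] integrable_priced_reward_accept
    by (intro integral_mono) (auto simp: right_diff_distrib d_def mult.commute)
  also have "\<dots> = (\<integral>s. priced_reward pstar (accept q s) s \<partial>P) - dualf P pstar (meanB P)"
    using integrable_priced_reward_accept by (simp add: integral_priced_reward_accept_pstar)
  finally show ?thesis by simp
qed

text \<open>Prices outside Omega_p carry no guarantee; replacing them by pstar makes the expected
  priced reward at least f(pstar; B) minus the penalty for every price.\<close>

definition clip_price :: "real ^ 'm \<Rightarrow> real ^ 'm" where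
  "clip_price q = (if q \<in> Omega_p rbar bl then q else pstar)"

lemma measurable_clip_price[measurable]: "clip_price \<in> borel_measurable borel"
  unfolding clip_price_def by measurable

lemma integral_priced_reward_accept_clip_ge:
  "dualf P pstar (meanB P) - mu * abar\<^sup>2 * ((norm (q - pstar))\<^sup>2 * indicator (Omega_p rbar bl) q)
    \<le> (\<integral>s. priced_reward pstar (accept (clip_price q) s) s \<partial>P)"
  using integral_priced_reward_accept_ge[of q] integral_priced_reward_accept_pstar
  by (cases "q \<in> Omega_p rbar bl") (simp_all add: clip_price_def)

lemma integrable_priced_reward:
  fixes M :: "'w measure" and Z :: "'w \<Rightarrow> 'm sample"
  assumes M: "prob_space M" and Z: "Z \<in> borel_measurable M" and Z_distr: "distr M borel Z = P"
    and Y: "Y \<in> borel_measurable M" and Y_cases: "\<And>w. w \<in> space M \<Longrightarrow> Y w = 0 \<or> Y w = 1"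
  shows "integrable M (\<lambda>w. priced_reward pstar (Y w) (Z w))"
proof -
  interpret M: prob_space M by (rule M)
  have "AE w in M. norm (priced_reward pstar (Y w) (Z w)) \<le> reward_bound"
    using AE_sample_bounded_distr[OF Z Z_distr] AE_space
    by eventually_elim (simp add: priced_reward_bounded Y_cases)
  moreover have "(\<lambda>w. priced_reward pstar (Y w) (Z w)) \<in> borel_measurable M"
    using Y Z by measurable
  ultimately show ?thesis by (intro M.integrable_const_bound)
qed

lemma integrable_norm_diff_pstar_indicator:
  fixes M :: "'w measure" and X :: "'w \<Rightarrow> real ^ 'm"
  assumes M: "prob_space M" and X: "X \<in> borel_measurable M"
  shows "integrable M (\<lambda>w. (norm (X w - pstar))\<^sup>2 * indicator (Omega_p rbar bl) (X w))"
proof -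
  interpret M: prob_space M by (rule M)
  have "\<bar>(norm (q - pstar))\<^sup>2 * indicator (Omega_p rbar bl) q\<bar> \<le> (2 * (rbar / bl))\<^sup>2" for q
    using norm_diff_pstar_le[of q] by (auto simp: indicator_def intro!: power_mono)
  then show ?thesis
    using X by (intro M.integrable_const_bound[where B="(2 * (rbar / bl))\<^sup>2"]) auto
qed

lemma integral_priced_reward_accept_clip_indep_ge:
  fixes M :: "'w measure" and X :: "'w \<Rightarrow> real ^ 'm" and Z :: "'w \<Rightarrow> 'm sample"
  assumes M: "prob_space M" and X[measurable]: "X \<in> borel_measurable M"
    and Z[measurable]: "Z \<in> borel_measurable M" and Z_distr: "distr M borel Z = P"
    and indep: "prob_space.indep_set M
      {X -` A \<inter> space M | A. A \<in> sets borel} {Z -` B \<inter> space M | B. B \<in> sets borel}"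
  shows "dualf P pstar (meanB P)
      - mu * abar\<^sup>2 * (\<integral>w. (norm (X w - pstar))\<^sup>2 * indicator (Omega_p rbar bl) (X w) \<partial>M)
    \<le> (\<integral>w. priced_reward pstar (accept (clip_price (X w)) (Z w)) (Z w) \<partial>M)"
proof -
  interpret M: prob_space M by (rule M)
  define N where "N q = (norm (q - pstar))\<^sup>2 * indicator (Omega_p rbar bl) q" for q
  define h where "h q s = priced_reward pstar (accept (clip_price q) s) s + mu * abar\<^sup>2 * N q" for q s
  have [measurable]: "N \<in> borel_measurable borel" unfolding N_def by measurable
  have int_N: "integrable M (\<lambda>w. N (X w))"
    unfolding N_def using M X by (rule integrable_norm_diff_pstar_indicator)
  have int_reward: "integrable M (\<lambda>w. priced_reward pstar (accept (clip_price (X w)) (Z w)) (Z w))"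
    using M Z Z_distr by (rule integrable_priced_reward) (simp_all add: accept_cases)
  have "dualf P pstar (meanB P) \<le> (\<integral>w. h (X w) (Z w) \<partial>M)"
  proof (rule M.integral_indep_ge[OF X Z indep])
    show "case_prod h \<in> borel_measurable (borel \<Otimes>\<^sub>M borel)" unfolding h_def by measurable
    show "integrable M (\<lambda>w. h (X w) (Z w))" unfolding h_def using int_reward int_N by auto
    show "dualf P pstar (meanB P) \<le> (\<integral>s. h (X w) s \<partial>distr M borel Z)" for w
      using integral_priced_reward_accept_clip_ge[of "X w"] integrable_priced_reward_accept
      unfolding Z_distr h_def N_def by (simp add: P.prob_space)
  qed
  then show ?thesis
    using int_reward int_N unfolding h_def N_def by simp
qed

lemma integral_priced_reward_ge:
  fixes M :: "'w measure" and X :: "'w \<Rightarrow> real ^ 'm" and Z :: "'w \<Rightarrow> 'm sample"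
  assumes M: "prob_space M" and X[measurable]: "X \<in> borel_measurable M"
    and Z[measurable]: "Z \<in> borel_measurable M" and Z_distr: "distr M borel Z = P"
    and indep: "prob_space.indep_set M
      {X -` A \<inter> space M | A. A \<in> sets borel} {Z -` B \<inter> space M | B. B \<in> sets borel}"
    and Y[measurable]: "Y \<in> borel_measurable M" and Y_cases: "\<And>w. w \<in> space M \<Longrightarrow> Y w = 0 \<or> Y w = 1"
    and E[measurable]: "E \<in> sets M"
    and on_E: "\<And>w. w \<in> E \<Longrightarrow> X w \<in> Omega_p rbar bl \<and> Y w = accept (X w) (Z w)"
  shows "dualf P pstar (meanB P)
      - mu * abar\<^sup>2 * (\<integral>w. (norm (X w - pstar))\<^sup>2 * indicator (Omega_p rbar bl) (X w) \<partial>M)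
      - 2 * reward_bound * measure M (space M - E)
    \<le> (\<integral>w. priced_reward pstar (Y w) (Z w) \<partial>M)"
proof -
  interpret M: prob_space M by (rule M)
  let ?clipped = "\<lambda>w. priced_reward pstar (accept (clip_price (X w)) (Z w)) (Z w)"
  have int_clipped: "integrable M ?clipped"
    using M Z Z_distr by (rule integrable_priced_reward) (simp_all add: accept_cases)
  have int_bad: "integrable M (indicator (space M - E) :: 'w \<Rightarrow> real)"
    by (intro integrable_real_indicator) (auto simp: less_top[symmetric])
  have "AE w in M. ?clipped w - 2 * reward_bound * indicator (space M - E) w \<le> priced_reward pstar (Y w) (Z w)"
    using AE_sample_bounded_distr[OF Z Z_distr] AE_space
  proof eventually_elim
    case (elim w)
    then show ?case
      using on_E[of w] priced_reward_diff_le[OF elim(1) Y_cases[OF elim(2)] accept_cases[of "clip_price (X w)" "Z w"]]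
      by (cases "w \<in> E") (simp_all add: clip_price_def)
  qed
  then have "(\<integral>w. ?clipped w - 2 * reward_bound * indicator (space M - E) w \<partial>M)
      \<le> (\<integral>w. priced_reward pstar (Y w) (Z w) \<partial>M)"
    using int_clipped int_bad integrable_priced_reward[OF M Z Z_distr Y Y_cases]
    by (intro integral_mono_AE) auto
  moreover have "(\<integral>w. ?clipped w - 2 * reward_bound * indicator (space M - E) w \<partial>M)
      = (\<integral>w. ?clipped w \<partial>M) - 2 * reward_bound * measure M (space M - E)"
    using int_clipped int_bad by simp
  ultimately show ?thesis
    using integral_priced_reward_accept_clip_indep_ge[OF M X Z Z_distr indep] by linarith
qed

end

section \<open>The allocation process\<close>

locale allocation_process = prob_space M
  for M :: "'w measure" +
  fixes \<tau>1 \<tau>2 :: int and r :: "int \<Rightarrow> 'w \<Rightarrow> real"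
    and a b p inv :: "int \<Rightarrow> 'w \<Rightarrow> real ^ 'm::finite" and x :: "int \<Rightarrow> 'w \<Rightarrow> real"
  assumes sample_measurable: "\<And>t. t \<in> {\<tau>1..\<tau>2} \<Longrightarrow> (\<lambda>w. (r t w, a t w, b t w)) \<in> borel_measurable M"
    and price_measurable: "\<And>t. t \<in> {\<tau>1..\<tau>2} \<Longrightarrow> p t \<in> borel_measurable M"
    and inv_init_measurable: "inv \<tau>1 \<in> borel_measurable M"
    and x_def: "\<And>t w. t \<in> {\<tau>1..\<tau>2} \<Longrightarrow> w \<in> space M \<Longrightarrow>
        x t w = (if r t w > a t w \<bullet> p t w then 1 else 0) *
                (if (\<forall>j. inv t w $ j + b t w $ j \<ge> a t w $ j) then 1 else 0)"
    and inv_step: "\<And>t w. t \<in> {\<tau>1..\<tau>2} \<Longrightarrow> w \<in> space M \<Longrightarrow>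
        inv (t + 1) w = inv t w + b t w - x t w *\<^sub>R a t w"
begin

lemma sample_components_measurable:
  assumes "t \<in> {\<tau>1..\<tau>2}"
  shows "r t \<in> borel_measurable M" "a t \<in> borel_measurable M" "b t \<in> borel_measurable M"
  using measurable_compose[OF sample_measurable[OF assms] borel_measurable_sample_components(1)]
    measurable_compose[OF sample_measurable[OF assms] borel_measurable_sample_components(2)]
    measurable_compose[OF sample_measurable[OF assms] borel_measurable_sample_components(3)]
  by (simp_all add: s_r_def s_a_def s_b_def)

lemma decision_measurable_if_inventory:
  assumes t: "t \<in> {\<tau>1..\<tau>2}" and [measurable]: "inv t \<in> borel_measurable M"
  shows "x t \<in> borel_measurable M"
proof -
  note [measurable] = sample_components_measurable[OF t] price_measurable[OF t]
  have "(\<lambda>w. (if r t w > a t w \<bullet> p t w then 1 else 0) *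
        (if (\<forall>j. inv t w $ j + b t w $ j \<ge> a t w $ j) then 1 else 0 :: real)) \<in> borel_measurable M"
    by measurable
  then show ?thesis using x_def[OF t] by (subst measurable_cong) auto
qed

lemma inventory_measurable:
  assumes "\<tau>1 \<le> t" "t \<le> \<tau>2 + 1" shows "inv t \<in> borel_measurable M"
  using assms
proof (induction t rule: int_ge_induct)
  case base
  show ?case by (rule inv_init_measurable)
next
  case (step t)
  then have t: "t \<in> {\<tau>1..\<tau>2}" and inv_t[measurable]: "inv t \<in> borel_measurable M" by simp_all
  note [measurable] = sample_components_measurable[OF t] decision_measurable_if_inventory[OF t inv_t]
  have "(\<lambda>w. inv t w + b t w - x t w *\<^sub>R a t w) \<in> borel_measurable M"
    by measurable
  then show ?case using inv_step[OF t] by (subst measurable_cong) auto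
qed

lemma decision_measurable: "t \<in> {\<tau>1..\<tau>2} \<Longrightarrow> x t \<in> borel_measurable M"
  using decision_measurable_if_inventory inventory_measurable by simp

lemma decision_cases: "t \<in> {\<tau>1..\<tau>2} \<Longrightarrow> w \<in> space M \<Longrightarrow> x t w = 0 \<or> x t w = 1"
  using x_def by simp

lemma inventory_telescope:
  assumes "\<tau>1 \<le> u" "u \<le> \<tau>2 + 1" and w: "w \<in> space M"
  shows "inv u w - inv \<tau>1 w = (\<Sum>t\<in>{\<tau>1..<u}. b t w - x t w *\<^sub>R a t w)"
  using assms
proof (induction u rule: int_ge_induct)
  case (step u)
  have "{\<tau>1..<u + 1} = insert u {\<tau>1..<u}" using step.hyps by auto
  then show ?case
    using step inv_step[of u w] w by (simp add: algebra_simps)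
qed simp

end

locale pricing_process =
  nondegenerate_dual P rbar abar bbar bl lam mu pstar + allocation_process M \<tau>1 \<tau>2 r a b p inv x
  for P :: "'m::finite sample measure" and rbar abar bbar bl lam mu :: real and pstar :: "real ^ 'm"
    and M :: "'w measure" and \<tau>1 \<tau>2 :: int and r :: "int \<Rightarrow> 'w \<Rightarrow> real"
    and a b p inv :: "int \<Rightarrow> 'w \<Rightarrow> real ^ 'm" and x :: "int \<Rightarrow> 'w \<Rightarrow> real" +
  assumes sample_distr: "\<And>t. t \<in> {\<tau>1..\<tau>2} \<Longrightarrow> distr M borel (\<lambda>w. (r t w, a t w, b t w)) = P"
    and price_indep_sample: "\<And>t. t \<in> {\<tau>1..\<tau>2} \<Longrightarrow> indep_set
      {p t -` A \<inter> space M | A. A \<in> sets borel}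
      {(\<lambda>w. (r t w, a t w, b t w)) -` B \<inter> space M | B. B \<in> sets borel}"
begin

definition regular_event :: "'w set" where
  "regular_event = {w \<in> space M. \<forall>t\<in>{\<tau>1..\<tau>2}.
     p t w \<in> Omega_p rbar bl \<and> x t w = (if r t w > a t w \<bullet> p t w then 1 else 0)}"

lemma regular_event_sets: "regular_event \<in> sets M"
  unfolding regular_event_def
proof (rule sets.sets_Collect_finite_All)
  fix t assume t: "t \<in> {\<tau>1..\<tau>2}"
  note [measurable] = sample_components_measurable[OF t] price_measurable[OF t] decision_measurable[OF t]
  show "{w \<in> space M. p t w \<in> Omega_p rbar bl \<and> x t w = (if r t w > a t w \<bullet> p t w then 1 else 0)} \<in> sets M"
    by measurable
qed simp

lemma integral_period_reward_ge:
  assumes t: "t \<in> {\<tau>1..\<tau>2}"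
  shows "dualf P pstar (meanB P)
      - mu * abar\<^sup>2 * (\<integral>w. (norm (p t w - pstar))\<^sup>2 * indicator (Omega_p rbar bl) (p t w) \<partial>M)
      - 2 * reward_bound * measure M (space M - regular_event)
    \<le> (\<integral>w. priced_reward pstar (x t w) (r t w, a t w, b t w) \<partial>M)"
proof (rule integral_priced_reward_ge)
  show "prob_space M" by unfold_locales
  show "\<And>w. w \<in> regular_event \<Longrightarrow>
      p t w \<in> Omega_p rbar bl \<and> x t w = accept (p t w) (r t w, a t w, b t w)"
    using t unfolding regular_event_def accept_def by (auto simp: s_r_def s_a_def)
qed (use t sample_measurable price_measurable sample_distr price_indep_sample decision_measurable
       decision_cases regular_event_sets in auto)

theorem expected_total_reward_ge:
  assumes "\<tau>1 \<le> \<tau>2"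
  shows "real_of_int (\<tau>2 - \<tau>1 + 1) * dualf P pstar (meanB P)
      - mu * abar\<^sup>2 * (\<integral>w. (\<Sum>t\<in>{\<tau>1..\<tau>2}. (norm (p t w - pstar))\<^sup>2 * indicator (Omega_p rbar bl) (p t w)) \<partial>M)
      - 2 * real_of_int (\<tau>2 - \<tau>1 + 1) * reward_bound * measure M (space M - regular_event)
    \<le> (\<integral>w. (\<Sum>t\<in>{\<tau>1..\<tau>2}. r t w * x t w) + (inv (\<tau>2 + 1) w - inv \<tau>1 w) \<bullet> pstar \<partial>M)"
proof -
  let ?T = "{\<tau>1..\<tau>2}"
  have total: "(\<Sum>t\<in>?T. r t w * x t w) + (inv (\<tau>2 + 1) w - inv \<tau>1 w) \<bullet> pstar
      = (\<Sum>t\<in>?T. priced_reward pstar (x t w) (r t w, a t w, b t w))" if "w \<in> space M" for w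
    using inventory_telescope[of "\<tau>2 + 1" w] assms that
    by (simp add: atLeastLessThanPlusOne_atLeastAtMost_int priced_reward_def s_r_def s_a_def s_b_def
        inner_sum_left sum.distrib)
  have "integrable M (\<lambda>w. priced_reward pstar (x t w) (r t w, a t w, b t w))" if "t \<in> ?T" for t
    using that sample_measurable sample_distr decision_measurable decision_cases
    by (intro integrable_priced_reward) (auto intro: prob_space_axioms)
  then have "(\<integral>w. (\<Sum>t\<in>?T. r t w * x t w) + (inv (\<tau>2 + 1) w - inv \<tau>1 w) \<bullet> pstar \<partial>M)
      = (\<Sum>t\<in>?T. \<integral>w. priced_reward pstar (x t w) (r t w, a t w, b t w) \<partial>M)"
    by (simp add: total Bochner_Integration.integral_sum cong: Bochner_Integration.integral_cong)
  moreover have "(\<Sum>t\<in>?T. dualf P pstar (meanB P)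
      - mu * abar\<^sup>2 * (\<integral>w. (norm (p t w - pstar))\<^sup>2 * indicator (Omega_p rbar bl) (p t w) \<partial>M)
      - 2 * reward_bound * measure M (space M - regular_event))
    \<le> (\<Sum>t\<in>?T. \<integral>w. priced_reward pstar (x t w) (r t w, a t w, b t w) \<partial>M)"
    by (intro sum_mono integral_period_reward_ge)
  moreover have "(\<integral>w. (\<Sum>t\<in>?T. (norm (p t w - pstar))\<^sup>2 * indicator (Omega_p rbar bl) (p t w)) \<partial>M)
      = (\<Sum>t\<in>?T. \<integral>w. (norm (p t w - pstar))\<^sup>2 * indicator (Omega_p rbar bl) (p t w) \<partial>M)"
    using price_measurable prob_space_axioms
    by (intro Bochner_Integration.integral_sum integrable_norm_diff_pstar_indicator) auto
  then have "(\<Sum>t\<in>?T. dualf P pstar (meanB P)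
      - mu * abar\<^sup>2 * (\<integral>w. (norm (p t w - pstar))\<^sup>2 * indicator (Omega_p rbar bl) (p t w) \<partial>M)
      - 2 * reward_bound * measure M (space M - regular_event))
    = real_of_int (\<tau>2 - \<tau>1 + 1) * dualf P pstar (meanB P)
      - mu * abar\<^sup>2 * (\<integral>w. (\<Sum>t\<in>?T. (norm (p t w - pstar))\<^sup>2 * indicator (Omega_p rbar bl) (p t w)) \<partial>M)
      - 2 * real_of_int (\<tau>2 - \<tau>1 + 1) * reward_bound * measure M (space M - regular_event)"
    using assms by (simp add: sum_subtractf sum_distrib_left)
  ultimately show ?thesis by linarith
qed

end

theorem lemma11:
  fixes P :: "'m::finite sample measure"
    and rbar abar bbar bl lam mu :: real
    and M :: "'w measure" and F :: "int \<Rightarrow> 'w measure"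
    and \<tau>1 \<tau>2 :: int
    and r :: "int \<Rightarrow> 'w \<Rightarrow> real" and a b :: "int \<Rightarrow> 'w \<Rightarrow> real ^ 'm"
    and p :: "int \<Rightarrow> 'w \<Rightarrow> real ^ 'm"
    and inv :: "int \<Rightarrow> 'w \<Rightarrow> real ^ 'm" and x :: "int \<Rightarrow> 'w \<Rightarrow> real"
    and inv0 pstar :: "real ^ 'm"
  assumes nondeg: "nondegenerate P rbar abar bbar bl lam mu"
    and pstar: "is_dual_min P (meanB P) pstar"
    and M: "prob_space M"
    and tau: "\<tau>1 \<le> \<tau>2"
    \<comment> \<open>filtration: information available up to each time\<close>
    and filt_sub: "\<And>t. subalgebra M (F t)"
    and filt_mono: "\<And>s t. s \<le> t \<Longrightarrow> sets (F s) \<subseteq> sets (F t)"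
    \<comment> \<open>samples: i.i.d. from P, revealed at time t\<close>
    and Z_adapted: "\<And>t. t \<in> {\<tau>1..\<tau>2} \<Longrightarrow> (\<lambda>w. (r t w, a t w, b t w)) \<in> borel_measurable (F t)"
    and Z_dist: "\<And>t. t \<in> {\<tau>1..\<tau>2} \<Longrightarrow> distr M borel (\<lambda>w. (r t w, a t w, b t w)) = P"
    and Z_iid: "prob_space.indep_vars M (\<lambda>_. borel) (\<lambda>t w. (r t w, a t w, b t w)) {\<tau>1..\<tau>2}"
    and Z_indep_past: "\<And>t. t \<in> {\<tau>1..\<tau>2} \<Longrightarrow>
        prob_space.indep_set M (sets (F (t - 1)))
          {(\<lambda>w. (r t w, a t w, b t w)) -` A \<inter> space M | A. A \<in> sets borel}"
    \<comment> \<open>prices chosen with information up to time t-1\<close>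
    and p_pred: "\<And>t. t \<in> {\<tau>1..\<tau>2} \<Longrightarrow> p t \<in> borel_measurable (F (t - 1))"
    and p_nonneg: "\<And>t w. t \<in> {\<tau>1..\<tau>2} \<Longrightarrow> w \<in> space M \<Longrightarrow> nonneg_vec (p t w)"
    \<comment> \<open>decisions and inventory dynamics\<close>
    and l0: "nonneg_vec inv0"
    and l_init: "\<And>w. w \<in> space M \<Longrightarrow> inv \<tau>1 w = inv0"
    and x_def: "\<And>t w. t \<in> {\<tau>1..\<tau>2} \<Longrightarrow> w \<in> space M \<Longrightarrow>
        x t w = (if r t w > a t w \<bullet> p t w then 1 else 0) *
                (if (\<forall>j. inv t w $ j + b t w $ j \<ge> a t w $ j) then 1 else 0)"
    and l_step: "\<And>t w. t \<in> {\<tau>1..\<tau>2} \<Longrightarrow> w \<in> space M \<Longrightarrow>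
        inv (t + 1) w = inv t w + b t w - x t w *\<^sub>R a t w"
  shows "(\<integral>w. (\<Sum>t\<in>{\<tau>1..\<tau>2}. r t w * x t w) + (inv (\<tau>2 + 1) w - inv \<tau>1 w) \<bullet> pstar \<partial>M)
         \<ge> real_of_int (\<tau>2 - \<tau>1 + 1) * dualf P pstar (meanB P)
           - mu * abar\<^sup>2 * (\<integral>w. (\<Sum>t\<in>{\<tau>1..\<tau>2}. (norm (p t w - pstar))\<^sup>2 * indicator (Omega_p rbar bl) (p t w)) \<partial>M)
           - 2 * real_of_int (\<tau>2 - \<tau>1 + 1) * (rbar + (bbar + abar) * (rbar / bl))
             * measure M (space M - {w \<in> space M. \<forall>t\<in>{\<tau>1..\<tau>2}.
                 p t w \<in> Omega_p rbar bl \<and> x t w = (if r t w > a t w \<bullet> p t w then 1 else 0)})"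
proof -
  interpret M: prob_space M by (rule M)
  have sample_measurable: "(\<lambda>w. (r t w, a t w, b t w)) \<in> borel_measurable M" if "t \<in> {\<tau>1..\<tau>2}" for t
    using measurable_from_subalg[OF filt_sub Z_adapted[OF that]] .
  interpret pricing_process P rbar abar bbar bl lam mu pstar M \<tau>1 \<tau>2 r a b p inv x
  proof unfold_locales
    show "inv \<tau>1 \<in> borel_measurable M"
      using l_init by (subst measurable_cong[where g="\<lambda>_. inv0"]) auto
    show "M.indep_set {p t -` A \<inter> space M | A. A \<in> sets borel}
        {(\<lambda>w. (r t w, a t w, b t w)) -` B \<inter> space M | B. B \<in> sets borel}" if "t \<in> {\<tau>1..\<tau>2}" for t
      using M.indep_set_vimage_if_subalgebra[OF filt_sub p_pred Z_indep_past] that by blast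
  qed (use nondeg pstar sample_measurable measurable_from_subalg[OF filt_sub p_pred] x_def l_step Z_dist in auto)
  show ?thesis
    using expected_total_reward_ge[OF tau] unfolding reward_bound_def regular_event_def .
qed

end
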